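(* Let $\mathfrak{l}$ be a finite-dimensional restricted Lie algebra over an algebraically closed field $\mathbb{K}$ of characteristic $p>0$, with $p$-map $a\mapsto a^{[p]}$, and let $\chi\in\mathfrak{l}^\ast$. On the vector space $\mathfrak{l}_\chi=\mathfrak{l}\oplus\mathbb{K}c$ define the Lie bracket $[a+\alpha c,b+\beta c]=[a,b]$ (so that $c$ is central and $\mathfrak{l}_\chi$ is the trivial central extension of $\mathfrak{l}$ as a Lie algebra) and the map $$(a+\alpha c)^{[p]}=a^{[p]}+(\chi(a)^p+\alpha^p)c\qquad(a\in\mathfrak{l},\ \alpha\in\mathbb{K}).$$ Then this defines a structure of restricted Lie algebra on $\mathfrak{l}_\chi$.
   Context: A restricted Lie algebra is a Lie algebra with a $p$-map satisfying Jacobson's axioms: $(\beta a)^{[p]}=\beta^p a^{[p]}$, $\operatorname{ad}(a^{[p]})=(\operatorname{ad}a)^p$, and $(a+b)^{[p]}=a^{[p]}+b^{[p]}+\sum_{i=1}^{p-1}s_i(a,b)$, where $i\,s_i(a,b)$ is the coefficient of $T^{i-1}$ in $(\operatorname{ad}(aT+b))^{p-1}(a)$. *)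

theory Defs
  imports "HOL-Library.Product_Plus" "HOL-Computational_Algebra.Polynomial"
begin

definition lie_algebra :: "('k::field \<Rightarrow> 'v::ab_group_add \<Rightarrow> 'v) \<Rightarrow> ('v \<Rightarrow> 'v \<Rightarrow> 'v) \<Rightarrow> bool" where
  "lie_algebra sc br \<longleftrightarrow> vector_space sc
     \<and> (\<forall>x y z. br (x + y) z = br x z + br y z)
     \<and> (\<forall>x y z. br x (y + z) = br x y + br x z)
     \<and> (\<forall>c x y. br (sc c x) y = sc c (br x y))
     \<and> (\<forall>c x y. br x (sc c y) = sc c (br x y))
     \<and> (\<forall>x. br x x = 0)
     \<and> (\<forall>x y z. br x (br y z) + br y (br z x) + br z (br x y) = 0)"

text \<open>Coefficient of T^(i-1) in (ad(aT+b))^(p-1)(a): sum over all words of length p-1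
in the letters a (True) and b (False) with exactly i-1 letters a of the iterated brackets.\<close>
definition ad_coeff :: "('v::ab_group_add \<Rightarrow> 'v \<Rightarrow> 'v) \<Rightarrow> nat \<Rightarrow> nat \<Rightarrow> 'v \<Rightarrow> 'v \<Rightarrow> 'v" where
  "ad_coeff br p i a b =
     (\<Sum>w\<in>{w::bool list. length w = p - 1 \<and> count_list w True = i - 1}.
        foldr (\<lambda>t acc. br (if t then a else b) acc) w a)"

text \<open>s_i(a,b), determined by i s_i(a,b) = ad_coeff (i is invertible for 1 <= i <= p-1).\<close>
definition jac_s :: "('k::field \<Rightarrow> 'v::ab_group_add \<Rightarrow> 'v) \<Rightarrow> ('v \<Rightarrow> 'v \<Rightarrow> 'v) \<Rightarrow> nat \<Rightarrow> nat \<Rightarrow> 'v \<Rightarrow> 'v \<Rightarrow> 'v" where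
  "jac_s sc br p i a b = sc (inverse (of_nat i)) (ad_coeff br p i a b)"

definition restricted_lie_algebra ::
  "('k::field \<Rightarrow> 'v::ab_group_add \<Rightarrow> 'v) \<Rightarrow> ('v \<Rightarrow> 'v \<Rightarrow> 'v) \<Rightarrow> ('v \<Rightarrow> 'v) \<Rightarrow> nat \<Rightarrow> bool" where
  "restricted_lie_algebra sc br pm p \<longleftrightarrow> lie_algebra sc br
     \<and> (\<forall>\<beta> a. pm (sc \<beta> a) = sc (\<beta> ^ p) (pm a))
     \<and> (\<forall>a b. br (pm a) b = (br a ^^ p) b)
     \<and> (\<forall>a b. pm (a + b) = pm a + pm b + (\<Sum>i=1..p-1. jac_s sc br p i a b))"

definition algebraically_closed :: "'k::field itself \<Rightarrow> bool" where
  "algebraically_closed _ \<longleftrightarrow> (\<forall>q::'k poly. degree q \<ge> 1 \<longrightarrow> (\<exists>x. poly q x = 0))"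

text \<open>The central extension l_chi = l \<oplus> K c, modelled on 'v \<times> 'k.\<close>
definition ext_scale :: "('k::field \<Rightarrow> 'v \<Rightarrow> 'v) \<Rightarrow> 'k \<Rightarrow> 'v \<times> 'k \<Rightarrow> 'v \<times> 'k" where
  "ext_scale sc \<beta> x = (sc \<beta> (fst x), \<beta> * snd x)"

definition ext_bracket :: "('v \<Rightarrow> 'v \<Rightarrow> 'v) \<Rightarrow> 'v \<times> 'k::field \<Rightarrow> 'v \<times> 'k \<Rightarrow> 'v \<times> 'k" where
  "ext_bracket br x y = (br (fst x) (fst y), 0)"

definition ext_pmap :: "('v \<Rightarrow> 'v) \<Rightarrow> ('v \<Rightarrow> 'k::field) \<Rightarrow> nat \<Rightarrow> 'v \<times> 'k \<Rightarrow> 'v \<times> 'k" where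
  "ext_pmap pm \<chi> p x = (pm (fst x), \<chi> (fst x) ^ p + snd x ^ p)"

end

theory Submission
  imports Defs "HOL-Computational_Algebra.Primes"
begin

text \<open>The central coordinate never enters a bracket, so every iterated bracket in
\<open>l\<^sub>\<chi>\<close> of length at least one is the corresponding bracket in \<open>l\<close> with central
component 0. Jacobson's axioms for \<open>l\<^sub>\<chi>\<close> thus reduce to those for \<open>l\<close>, except in the
central coordinate, where additivity of \<open>a + \<alpha>c \<mapsto> \<chi>(a)\<^sup>p + \<alpha>\<^sup>p\<close> is the linearity of
\<open>\<chi>\<close> combined with the Frobenius identity \<open>(x + y)\<^sup>p = x\<^sup>p + y\<^sup>p\<close> in characteristic \<open>p\<close>.\<close>

lemma lie_algebra_ext:
  assumes "lie_algebra sc br"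
  shows "lie_algebra (ext_scale sc) (ext_bracket br)"
  using assms unfolding lie_algebra_def
  by (auto simp: vector_space_def ext_scale_def ext_bracket_def algebra_simps zero_prod_def)

lemma fst_foldr_ext_bracket:
  "fst (foldr (\<lambda>t acc. ext_bracket br (if t then a else b) acc) w c)
   = foldr (\<lambda>t acc. br (if t then fst a else fst b) acc) w (fst c)"
  by (induction w) (auto simp: ext_bracket_def)

lemma foldr_ext_bracket:
  assumes "w \<noteq> []"
  shows "foldr (\<lambda>t acc. ext_bracket br (if t then a else b) acc) w c
   = (foldr (\<lambda>t acc. br (if t then fst a else fst b) acc) w (fst c), 0)"
proof -
  obtain t w' where "w = t # w'"
    using assms by (cases w) auto
  then show ?thesis
    using fst_foldr_ext_bracket[of br a b w' c] by (simp add: ext_bracket_def)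
qed

lemma ad_coeff_ext_bracket:
  assumes "p \<ge> 2"
  shows "ad_coeff (ext_bracket br) p i a b = (ad_coeff br p i (fst a) (fst b), 0)"
proof -
  let ?W = "{w::bool list. length w = p - 1 \<and> count_list w True = i - 1}"
  have "ad_coeff (ext_bracket br) p i a b
     = (\<Sum>w\<in>?W. (foldr (\<lambda>t acc. br (if t then fst a else fst b) acc) w (fst a), 0))"
    unfolding ad_coeff_def
    by (rule sum.cong) (use assms in \<open>auto intro!: foldr_ext_bracket\<close>)
  also have "\<dots> = (ad_coeff br p i (fst a) (fst b), 0)"
    by (simp add: prod_eq_iff fst_sum snd_sum ad_coeff_def)
  finally show ?thesis .
qed

lemma jac_s_ext:
  assumes "p \<ge> 2"
  shows "jac_s (ext_scale sc) (ext_bracket br) p i a b = (jac_s sc br p i (fst a) (fst b), 0)"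
  unfolding jac_s_def ad_coeff_ext_bracket[OF assms] by (simp add: ext_scale_def)

lemma funpow_ext_bracket:
  assumes "n \<ge> 1"
  shows "(ext_bracket br a ^^ n) b = ((br (fst a) ^^ n) (fst b), 0)"
proof -
  have "(ext_bracket br a ^^ Suc m) b = ((br (fst a) ^^ Suc m) (fst b), 0)" for m
    by (induction m) (auto simp: ext_bracket_def)
  then show ?thesis
    using assms by (metis Suc_le_D One_nat_def)
qed

lemma ext_pmap_scale:
  assumes "\<And>\<beta> a. pm (sc \<beta> a) = sc (\<beta> ^ p) (pm a)"
    and "Vector_Spaces.linear sc (*) \<chi>"
  shows "ext_pmap pm \<chi> p (ext_scale sc \<beta> a) = ext_scale sc (\<beta> ^ p) (ext_pmap pm \<chi> p a)"
proof -
  have "\<chi> (sc \<beta> (fst a)) = \<beta> * \<chi> (fst a)"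
    using assms(2) by (simp add: Vector_Spaces.linear_iff)
  then show ?thesis
    by (simp add: ext_pmap_def ext_scale_def assms(1) power_mult_distrib algebra_simps)
qed

lemma ext_pmap_bracket:
  assumes "\<And>a b. br (pm a) b = (br a ^^ p) b" and "p \<ge> 1"
  shows "ext_bracket br (ext_pmap pm \<chi> p a) b = (ext_bracket br a ^^ p) b"
  by (simp add: funpow_ext_bracket[OF assms(2)] ext_bracket_def ext_pmap_def assms(1))

lemma ext_pmap_add:
  fixes \<chi> :: "'v::ab_group_add \<Rightarrow> 'k::field"
  assumes "\<And>a b. pm (a + b) = pm a + pm b + (\<Sum>i=1..p-1. jac_s sc br p i a b)"
    and "Vector_Spaces.linear sc (*) \<chi>"
    and "prime p" and "CHAR('k) = p"
  shows "ext_pmap pm \<chi> p (a + b) = ext_pmap pm \<chi> p a + ext_pmap pm \<chi> p b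
      + (\<Sum>i=1..p-1. jac_s (ext_scale sc) (ext_bracket br) p i a b)"
proof -
  have "p \<ge> 2"
    using assms(3) prime_ge_2_nat by blast
  have \<chi>_add: "\<chi> (fst a + fst b) = \<chi> (fst a) + \<chi> (fst b)"
    using assms(2) by (simp add: Vector_Spaces.linear_iff)
  have frobenius: "(x + y) ^ p = x ^ p + y ^ p" for x y :: 'k
    using assms(3,4) by (intro freshmans_dream) simp_all
  show ?thesis
    by (simp add: jac_s_ext[OF \<open>p \<ge> 2\<close>] prod_eq_iff fst_sum snd_sum ext_pmap_def
        assms(1) \<chi>_add frobenius algebra_simps)
qed

lemma restricted_lie_algebra_ext:
  fixes \<chi> :: "'v::ab_group_add \<Rightarrow> 'k::field"
  assumes "restricted_lie_algebra sc br pm p"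
    and "Vector_Spaces.linear sc (*) \<chi>"
    and "prime p" and "CHAR('k) = p"
  shows "restricted_lie_algebra (ext_scale sc) (ext_bracket br) (ext_pmap pm \<chi> p) p"
proof -
  have "p \<ge> 1"
    using assms(3) prime_ge_1_nat by blast
  from assms(1) have lie: "lie_algebra sc br"
    and scale: "\<And>\<beta> a. pm (sc \<beta> a) = sc (\<beta> ^ p) (pm a)"
    and bracket: "\<And>a b. br (pm a) b = (br a ^^ p) b"
    and add: "\<And>a b. pm (a + b) = pm a + pm b + (\<Sum>i=1..p-1. jac_s sc br p i a b)"
    unfolding restricted_lie_algebra_def by auto
  show ?thesis
    unfolding restricted_lie_algebra_def
    using lie_algebra_ext[OF lie] ext_pmap_scale[OF scale assms(2)]
      ext_pmap_bracket[where br = br and pm = pm, OF bracket \<open>p \<ge> 1\<close>] ext_pmap_add[OF add assms(2-4)]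
    by blast
qed

theorem proposition1p2p3:
  fixes sc :: "'k::field \<Rightarrow> 'v::ab_group_add \<Rightarrow> 'v"
    and br :: "'v \<Rightarrow> 'v \<Rightarrow> 'v"
    and pm :: "'v \<Rightarrow> 'v"
    and \<chi> :: "'v \<Rightarrow> 'k"
    and p :: nat
  assumes "prime p" and "CHAR('k) = p"
    and "algebraically_closed TYPE('k)"
    and "\<exists>B. finite_dimensional_vector_space sc B"
    and "restricted_lie_algebra sc br pm p"
    and "Vector_Spaces.linear sc (*) \<chi>"
  shows "restricted_lie_algebra (ext_scale sc) (ext_bracket br) (ext_pmap pm \<chi> p) p"
  using restricted_lie_algebra_ext[OF assms(5,6,1,2)] .

end
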